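(* Let $a\in\mathbb{O}$ with $a^2=\pm1$. Then the map $\Phi:{}^*\mathbb{O}(a,1)\to\mathbb{O}_{T_{a,\bar a}\circ\sigma_{\mathbb{O}}}$, $x\mapsto \bar a x$, is an isomorphism of algebras. Consequently, if $a^2=-1$, then $\mathbb{O}_{T_{a,\bar a}\circ\sigma_{\mathbb{O}}}$ is isomorphic to ${}^*\mathbb{O}(i,1)$.
   Context: $\mathbb{O}$ is the real octonion algebra, $\sigma_{\mathbb{O}}(x)=\bar x$ its conjugation, $i\in\mathbb{O}$ a fixed element with $i^2=-1$, and $T_{a,\bar a}(x)=ax\bar a$ (well defined by alternativity). For a linear map $f$ of $\mathbb{O}$, $\mathbb{O}_f$ is $\mathbb{O}$ with product $x* y=f(x)y$. For norm-one $a$, ${}^*\mathbb{O}(a,1)$ is $\mathbb{O}$ with product $x\odot y=(\bar x a)y$. *)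

theory Defs
  imports "HOL-Analysis.Product_Vector"
begin

text \<open>Quaternions and octonions via the Cayley--Dickson construction:
  H = C x C, O = H x H, with (a,b)(c,d) = (ac - conj(d) b, d a + b conj(c))
  and conj(a,b) = (conj a, -b).\<close>

type_synonym quat = "complex \<times> complex"
type_synonym oct = "quat \<times> quat"

definition qmult :: "quat \<Rightarrow> quat \<Rightarrow> quat" where
  "qmult x y = (case x of (a, b) \<Rightarrow> case y of (c, d) \<Rightarrow>
      (a * c - cnj d * b, d * a + b * cnj c))"

definition qconj :: "quat \<Rightarrow> quat" where
  "qconj x = (case x of (a, b) \<Rightarrow> (cnj a, - b))"

definition omult :: "oct \<Rightarrow> oct \<Rightarrow> oct" where
  "omult x y = (case x of (a, b) \<Rightarrow> case y of (c, d) \<Rightarrow>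
      (qmult a c - qmult (qconj d) b, qmult d a + qmult b (qconj c)))"

definition oconj :: "oct \<Rightarrow> oct" where
  "oconj x = (case x of (a, b) \<Rightarrow> (qconj a, - b))"

definition oone :: oct where
  "oone = ((1, 0), 0)"

text \<open>T_{a, conj a}(x) = a x conj(a) (well defined by alternativity).\<close>
definition T_conj :: "oct \<Rightarrow> oct \<Rightarrow> oct" where
  "T_conj a x = omult (omult a x) (oconj a)"

text \<open>Product of O_f: x * y = f(x) y.\<close>
definition twisted_mult :: "(oct \<Rightarrow> oct) \<Rightarrow> oct \<Rightarrow> oct \<Rightarrow> oct" where
  "twisted_mult f x y = omult (f x) y"

text \<open>Product of *O(a,1): x . y = (conj(x) a) y.\<close>
definition star_mult :: "oct \<Rightarrow> oct \<Rightarrow> oct \<Rightarrow> oct" where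
  "star_mult a x y = omult (omult (oconj x) a) y"

definition alg_iso :: "('a::real_vector \<Rightarrow> 'a \<Rightarrow> 'a) \<Rightarrow> ('b::real_vector \<Rightarrow> 'b \<Rightarrow> 'b)
    \<Rightarrow> ('a \<Rightarrow> 'b) \<Rightarrow> bool" where
  "alg_iso m1 m2 \<phi> \<longleftrightarrow> linear \<phi> \<and> bij \<phi> \<and> (\<forall>x y. \<phi> (m1 x y) = m2 (\<phi> x) (\<phi> y))"

end

theory Submission
  imports Defs
begin

text \<open>If \<open>a\<^sup>2 = \<plusminus>1\<close> then \<open>a\<close> is either \<open>\<plusminus>1\<close> or a unit imaginary octonion, so
  \<open>conj a = \<plusminus>a\<close> and \<open>conj a (a x) = x\<close> by left alternativity; hence \<open>x \<mapsto> conj a x\<close> is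
  bijective. It is multiplicative because the twisted product of \<open>conj a x\<close> and \<open>conj a y\<close>
  is \<open>(a z a) (a y)\<close> up to sign, with \<open>z = conj x a\<close>, and the Moufang identity
  \<open>(a z a) w = a (z (a w))\<close> turns it into \<open>conj a ((conj x a) y)\<close>.

  For the second claim, the automorphism group of the octonions acts transitively on the
  unit imaginary octonions: rotations \<open>(p, q) \<mapsto> (p, s q)\<close> of the second Cayley--Dickson half
  by unit quaternions \<open>s\<close>, alternated with signed coordinate permutations, move any of them
  to the basis vector \<open>e\<^sub>1\<close>. An automorphism \<open>g\<close> with \<open>g a = i\<close> is an isomorphism
  \<open>*O(a,1) \<cong> *O(i,1)\<close>, which is composed with the inverse of the first isomorphism.\<close>

lemma alg_iso_comp:
  assumes "alg_iso m1 m2 \<phi>" "alg_iso m2 m3 \<psi>"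
  shows "alg_iso m1 m3 (\<psi> \<circ> \<phi>)"
  using assms by (simp add: alg_iso_def linear_compose bij_comp)

lemma alg_iso_inv:
  assumes "alg_iso m1 m2 \<phi>"
  shows "alg_iso m2 m1 (inv \<phi>)"
proof -
  have lin: "linear \<phi>" and bij: "bij \<phi>" and hom: "\<And>x y. \<phi> (m1 x y) = m2 (\<phi> x) (\<phi> y)"
    using assms by (auto simp: alg_iso_def)
  have \<phi>_inv: "\<phi> (inv \<phi> x) = x" for x
    using bij by (simp add: bij_is_surj surj_f_inv_f)
  have inv_eqI: "inv \<phi> y = x" if "\<phi> x = y" for x y
    using bij that by (auto simp: bij_is_inj)
  have "linear (inv \<phi>)"
  proof (rule linearI)
    fix x y show "inv \<phi> (x + y) = inv \<phi> x + inv \<phi> y"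
      by (rule inv_eqI) (simp add: linear_add[OF lin] \<phi>_inv)
  next
    fix r x show "inv \<phi> (r *\<^sub>R x) = r *\<^sub>R inv \<phi> x"
      by (rule inv_eqI) (simp add: linear_scale[OF lin] \<phi>_inv)
  qed
  moreover have "inv \<phi> (m2 x y) = m1 (inv \<phi> x) (inv \<phi> y)" for x y
    by (rule inv_eqI) (simp add: hom \<phi>_inv)
  ultimately show ?thesis
    using bij by (simp add: alg_iso_def bij_imp_bij_inv)
qed

section \<open>Real coordinates\<close>

text \<open>\<open>Oc x0 \<dots> x7\<close> is \<open>x0 + x1 e\<^sub>1 + \<dots> + x7 e\<^sub>7\<close>; \<open>omult_Oc\<close> below is the resulting
  multiplication table, which reduces identities of the octonions to polynomial identities.\<close>

definition Oc :: "real \<Rightarrow> real \<Rightarrow> real \<Rightarrow> real \<Rightarrow> real \<Rightarrow> real \<Rightarrow> real \<Rightarrow> real \<Rightarrow> oct" where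
  "Oc x0 x1 x2 x3 x4 x5 x6 x7 = ((Complex x0 x1, Complex x2 x3), (Complex x4 x5, Complex x6 x7))"

definition oc :: "oct \<Rightarrow> nat \<Rightarrow> real" where
  "oc x k = [Re (fst (fst x)), Im (fst (fst x)), Re (snd (fst x)), Im (snd (fst x)),
             Re (fst (snd x)), Im (fst (snd x)), Re (snd (snd x)), Im (snd (snd x))] ! k"

lemma oct_cases: obtains x0 x1 x2 x3 x4 x5 x6 x7 where "x = Oc x0 x1 x2 x3 x4 x5 x6 x7"
  unfolding Oc_def by (metis complex.exhaust_sel prod.collapse)

lemma oct_forall:
  "(\<forall>x. P x) \<longleftrightarrow> (\<forall>x0 x1 x2 x3 x4 x5 x6 x7. P (Oc x0 x1 x2 x3 x4 x5 x6 x7))"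
  by (metis oct_cases)

lemma oc_Oc [simp]:
  "oc (Oc x0 x1 x2 x3 x4 x5 x6 x7) 0 = x0" "oc (Oc x0 x1 x2 x3 x4 x5 x6 x7) (Suc 0) = x1"
  "oc (Oc x0 x1 x2 x3 x4 x5 x6 x7) 2 = x2" "oc (Oc x0 x1 x2 x3 x4 x5 x6 x7) 3 = x3"
  "oc (Oc x0 x1 x2 x3 x4 x5 x6 x7) 4 = x4" "oc (Oc x0 x1 x2 x3 x4 x5 x6 x7) 5 = x5"
  "oc (Oc x0 x1 x2 x3 x4 x5 x6 x7) 6 = x6" "oc (Oc x0 x1 x2 x3 x4 x5 x6 x7) 7 = x7"
  by (simp_all add: oc_def Oc_def)

lemma Oc_eq_iff:
  "Oc x0 x1 x2 x3 x4 x5 x6 x7 = Oc y0 y1 y2 y3 y4 y5 y6 y7 \<longleftrightarrow>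
    x0 = y0 \<and> x1 = y1 \<and> x2 = y2 \<and> x3 = y3 \<and> x4 = y4 \<and> x5 = y5 \<and> x6 = y6 \<and> x7 = y7"
  by (simp add: Oc_def)

lemma omult_Oc:
  "omult (Oc x0 x1 x2 x3 x4 x5 x6 x7) (Oc y0 y1 y2 y3 y4 y5 y6 y7) = Oc
    (x0*y0 - x1*y1 - x2*y2 - x3*y3 - x4*y4 - x5*y5 - x6*y6 - x7*y7)
    (x0*y1 + x1*y0 + x2*y3 - x3*y2 + x4*y5 - x5*y4 - x6*y7 + x7*y6)
    (x0*y2 - x1*y3 + x2*y0 + x3*y1 + x4*y6 + x5*y7 - x6*y4 - x7*y5)
    (x0*y3 + x1*y2 - x2*y1 + x3*y0 + x4*y7 - x5*y6 + x6*y5 - x7*y4)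
    (x0*y4 - x1*y5 - x2*y6 - x3*y7 + x4*y0 + x5*y1 + x6*y2 + x7*y3)
    (x0*y5 + x1*y4 - x2*y7 + x3*y6 - x4*y1 + x5*y0 - x6*y3 + x7*y2)
    (x0*y6 + x1*y7 + x2*y4 - x3*y5 - x4*y2 + x5*y3 + x6*y0 - x7*y1)
    (x0*y7 - x1*y6 + x2*y5 + x3*y4 - x4*y3 - x5*y2 + x6*y1 + x7*y0)"
  by (simp add: Oc_def omult_def qmult_def qconj_def complex_eq_iff algebra_simps)

lemma oconj_Oc:
  "oconj (Oc x0 x1 x2 x3 x4 x5 x6 x7) = Oc x0 (-x1) (-x2) (-x3) (-x4) (-x5) (-x6) (-x7)"
  by (simp add: Oc_def oconj_def qconj_def complex_eq_iff)

lemma oone_Oc: "oone = Oc 1 0 0 0 0 0 0 0"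
  by (simp add: Oc_def oone_def complex_eq_iff prod_eq_iff)

lemma plus_Oc:
  "Oc x0 x1 x2 x3 x4 x5 x6 x7 + Oc y0 y1 y2 y3 y4 y5 y6 y7 =
    Oc (x0+y0) (x1+y1) (x2+y2) (x3+y3) (x4+y4) (x5+y5) (x6+y6) (x7+y7)"
  by (simp add: Oc_def complex_eq_iff)

lemma uminus_Oc: "- Oc x0 x1 x2 x3 x4 x5 x6 x7 = Oc (-x0) (-x1) (-x2) (-x3) (-x4) (-x5) (-x6) (-x7)"
  by (simp add: Oc_def complex_eq_iff)

lemma scaleR_Oc:
  "r *\<^sub>R Oc x0 x1 x2 x3 x4 x5 x6 x7 = Oc (r*x0) (r*x1) (r*x2) (r*x3) (r*x4) (r*x5) (r*x6) (r*x7)"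
  by (simp add: Oc_def complex_eq_iff scaleR_complex.code)

lemmas Oc_simps = omult_Oc oconj_Oc oone_Oc plus_Oc uminus_Oc scaleR_Oc Oc_eq_iff

lemma omult_oone [simp]: "omult x oone = x" "omult oone x = x"
  by (cases x rule: oct_cases; simp add: Oc_simps)+

lemma omult_minus [simp]: "omult (- x) y = - omult x y" "omult x (- y) = - omult x y"
  by (cases x rule: oct_cases; cases y rule: oct_cases; simp add: Oc_simps algebra_simps)+

lemma oconj_omult: "oconj (omult x y) = omult (oconj y) (oconj x)"
  by (cases x rule: oct_cases; cases y rule: oct_cases) (simp add: Oc_simps algebra_simps)

lemma omult_left_alternative: "omult a (omult a y) = omult (omult a a) y"
  by (cases a rule: oct_cases; cases y rule: oct_cases) (simp add: Oc_simps algebra_simps)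

lemma omult_moufang: "omult (omult (omult a z) a) y = omult a (omult z (omult a y))"
proof -
  obtain a0 a1 a2 a3 a4 a5 a6 a7 where a: "a = Oc a0 a1 a2 a3 a4 a5 a6 a7" by (rule oct_cases)
  obtain z0 z1 z2 z3 z4 z5 z6 z7 where z: "z = Oc z0 z1 z2 z3 z4 z5 z6 z7" by (rule oct_cases)
  obtain y0 y1 y2 y3 y4 y5 y6 y7 where y: "y = Oc y0 y1 y2 y3 y4 y5 y6 y7" by (rule oct_cases)
  show ?thesis
    unfolding a z y by (simp only: Oc_simps) (intro conjI; algebra)
qed

lemma linear_omult: "linear (omult c)"
proof (rule linearI)
  fix x y show "omult c (x + y) = omult c x + omult c y"
    by (cases c rule: oct_cases; cases x rule: oct_cases; cases y rule: oct_cases)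
      (simp add: Oc_simps algebra_simps)
next
  fix r x show "omult c (r *\<^sub>R x) = r *\<^sub>R omult c x"
    by (cases c rule: oct_cases; cases x rule: oct_cases) (simp add: Oc_simps algebra_simps)
qed

section \<open>The isomorphism \<open>x \<mapsto> conj a x\<close>\<close>

lemma omult_self_Oc:
  "omult (Oc a0 a1 a2 a3 a4 a5 a6 a7) (Oc a0 a1 a2 a3 a4 a5 a6 a7) =
    Oc (a0*a0 - (a1*a1 + a2*a2 + a3*a3 + a4*a4 + a5*a5 + a6*a6 + a7*a7))
      (2*a0*a1) (2*a0*a2) (2*a0*a3) (2*a0*a4) (2*a0*a5) (2*a0*a6) (2*a0*a7)"
  by (simp add: Oc_simps algebra_simps)

lemma oconj_eq_if_square_eq_oone:
  assumes "omult a a = oone"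
  shows "oconj a = a"
proof -
  obtain a0 a1 a2 a3 a4 a5 a6 a7 where a: "a = Oc a0 a1 a2 a3 a4 a5 a6 a7" by (rule oct_cases)
  define S where "S = a1*a1 + a2*a2 + a3*a3 + a4*a4 + a5*a5 + a6*a6 + a7*a7"
  have sq: "a0*a0 - S = 1" "a0*a1 = 0" "a0*a2 = 0" "a0*a3 = 0"
    "a0*a4 = 0" "a0*a5 = 0" "a0*a6 = 0" "a0*a7 = 0"
    using assms unfolding a omult_self_Oc S_def by (simp_all add: Oc_simps)
  have "S \<ge> 0" unfolding S_def by simp
  then have "a0 \<noteq> 0" using sq(1) by auto
  then show ?thesis using sq unfolding a by (simp add: Oc_simps)
qed

lemma oconj_eq_if_square_eq_minus_oone:
  assumes "omult a a = - oone"
  shows "oconj a = - a"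
proof -
  obtain a0 a1 a2 a3 a4 a5 a6 a7 where a: "a = Oc a0 a1 a2 a3 a4 a5 a6 a7" by (rule oct_cases)
  define S where "S = a1*a1 + a2*a2 + a3*a3 + a4*a4 + a5*a5 + a6*a6 + a7*a7"
  have sq: "a0*a0 - S = -1" "a0*a1 = 0" "a0*a2 = 0" "a0*a3 = 0"
    "a0*a4 = 0" "a0*a5 = 0" "a0*a6 = 0" "a0*a7 = 0"
    using assms unfolding a omult_self_Oc S_def by (simp_all add: Oc_simps)
  have "a0 = 0"
  proof (rule ccontr)
    assume "a0 \<noteq> 0"
    then have "S = 0" using sq unfolding S_def by simp
    then show False using sq(1) by (smt (verit) zero_le_square)
  qed
  then show ?thesis unfolding a by (simp add: Oc_simps)
qed

lemma omult_oconj_cancel: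
  assumes "omult a a = oone \<or> omult a a = - oone"
  shows "omult (oconj a) (omult a x) = x" "omult a (omult (oconj a) x) = x"
  using assms
  by (auto simp: omult_left_alternative oconj_eq_if_square_eq_oone oconj_eq_if_square_eq_minus_oone)

lemma omult_oconj_star_mult:
  assumes "omult a a = oone \<or> omult a a = - oone"
  shows "omult (oconj a) (star_mult a x y) =
    twisted_mult (T_conj a \<circ> oconj) (omult (oconj a) x) (omult (oconj a) y)"
proof -
  have "twisted_mult (T_conj a \<circ> oconj) (omult (oconj a) x) (omult (oconj a) y)
      = omult (omult (omult a (omult (oconj x) a)) a) (omult a y)"
    using assms by (auto simp: twisted_mult_def T_conj_def oconj_omult
        oconj_eq_if_square_eq_oone oconj_eq_if_square_eq_minus_oone)
  also have "\<dots> = omult a (omult (omult (oconj x) a) (omult a (omult a y)))"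
    by (rule omult_moufang)
  also have "\<dots> = omult (oconj a) (star_mult a x y)"
    using assms by (auto simp: omult_left_alternative star_mult_def
        oconj_eq_if_square_eq_oone oconj_eq_if_square_eq_minus_oone)
  finally show ?thesis by simp
qed

lemma alg_iso_omult_oconj:
  assumes "omult a a = oone \<or> omult a a = - oone"
  shows "alg_iso (star_mult a) (twisted_mult (T_conj a \<circ> oconj)) (omult (oconj a))"
  unfolding alg_iso_def
proof (intro conjI allI)
  show "linear (omult (oconj a))" by (rule linear_omult)
  show "bij (omult (oconj a))"
    by (rule o_bij[where g = "omult a"]) (simp_all add: fun_eq_iff omult_oconj_cancel[OF assms])
  show "omult (oconj a) (star_mult a x y) =
      twisted_mult (T_conj a \<circ> oconj) (omult (oconj a) x) (omult (oconj a) y)" for x y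
    using assms by (rule omult_oconj_star_mult)
qed

section \<open>Automorphisms and imaginary units\<close>

definition oct_automorphism :: "(oct \<Rightarrow> oct) \<Rightarrow> bool" where
  "oct_automorphism g \<longleftrightarrow> alg_iso omult omult g \<and> (\<forall>x. g (oconj x) = oconj (g x))"

lemma oct_automorphismI:
  assumes "\<forall>x y. g (x + y) = g x + g y" "\<forall>r x. g (r *\<^sub>R x) = r *\<^sub>R g x"
    and "\<forall>x. h (g x) = x" "\<forall>x. g (h x) = x"
    and "\<forall>x y. g (omult x y) = omult (g x) (g y)" "\<forall>x. g (oconj x) = oconj (g x)"
  shows "oct_automorphism g"
proof -
  have "linear g"
    by (rule linearI) (use assms in blast)+
  moreover have "bij g"
    by (rule o_bij[where g = h]) (use assms in \<open>simp_all add: fun_eq_iff\<close>)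
  ultimately show ?thesis
    using assms unfolding oct_automorphism_def alg_iso_def by blast
qed

lemma oct_automorphism_comp:
  assumes "oct_automorphism g" "oct_automorphism h"
  shows "oct_automorphism (g \<circ> h)"
proof -
  have "alg_iso omult omult h" "alg_iso omult omult g"
    and "\<And>x. g (oconj x) = oconj (g x)" "\<And>x. h (oconj x) = oconj (h x)"
    using assms unfolding oct_automorphism_def by blast+
  then show ?thesis
    unfolding oct_automorphism_def by (simp add: alg_iso_comp)
qed

lemma oct_automorphism_inv:
  assumes "oct_automorphism g"
  shows "oct_automorphism (inv g)"
proof -
  have iso: "alg_iso omult omult g" and conj: "\<And>x. g (oconj x) = oconj (g x)"
    using assms unfolding oct_automorphism_def by blast+
  then have "bij g" by (simp add: alg_iso_def)
  then have "inv g (oconj x) = oconj (inv g x)" for x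
    by (intro inv_f_eq) (simp_all add: bij_is_inj conj bij_is_surj surj_f_inv_f)
  with iso show ?thesis
    unfolding oct_automorphism_def by (simp add: alg_iso_inv)
qed

lemma oct_automorphism_oone:
  assumes "oct_automorphism g"
  shows "g oone = oone"
proof -
  have hom: "\<And>x y. g (omult x y) = omult (g x) (g y)" and "surj g"
    using assms by (auto simp: oct_automorphism_def alg_iso_def bij_is_surj)
  then obtain z where z: "g z = oone" by (metis surjD)
  have "g oone = omult (g oone) (g z)" by (simp add: z)
  also have "\<dots> = g (omult oone z)" by (simp only: hom)
  also have "\<dots> = oone" by (simp add: z)
  finally show ?thesis .
qed

lemma oct_automorphism_star_mult:
  assumes "oct_automorphism g"
  shows "alg_iso (star_mult a) (star_mult (g a)) g"
proof -
  have "linear g" "bij g" and hom: "\<And>x y. g (omult x y) = omult (g x) (g y)"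
    and conj: "\<And>x. g (oconj x) = oconj (g x)"
    using assms unfolding oct_automorphism_def alg_iso_def by blast+
  then show ?thesis
    unfolding alg_iso_def star_mult_def by (simp only: hom conj simp_thms)
qed

lemma signed_coordinate_permutation_automorphisms:
  "oct_automorphism (\<lambda>x. Oc (oc x 0) (oc x 1) (oc x 4) (oc x 5) (oc x 2) (oc x 3) (- oc x 6) (- oc x 7))"
  "oct_automorphism (\<lambda>x. Oc (oc x 0) (oc x 1) (oc x 6) (- oc x 7) (oc x 2) (oc x 3) (oc x 4) (- oc x 5))"
  "oct_automorphism (\<lambda>x. Oc (oc x 0) (oc x 5) (oc x 2) (- oc x 7) (oc x 1) (oc x 4) (- oc x 3) (oc x 6))"
  "oct_automorphism (\<lambda>x. Oc (oc x 0) (oc x 4) (oc x 1) (- oc x 5) (oc x 2) (- oc x 6) (oc x 3) (oc x 7))"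
  subgoal by (rule oct_automorphismI[where h = "\<lambda>y. Oc (oc y 0) (oc y 1) (oc y 4) (oc y 5) (oc y 2) (oc y 3) (- oc y 6) (- oc y 7)"])
      (simp_all add: oct_forall Oc_simps algebra_simps del: split_paired_All)
  subgoal by (rule oct_automorphismI[where h = "\<lambda>y. Oc (oc y 0) (oc y 1) (oc y 4) (oc y 5) (oc y 6) (- oc y 7) (oc y 2) (- oc y 3)"])
      (simp_all add: oct_forall Oc_simps algebra_simps del: split_paired_All)
  subgoal by (rule oct_automorphismI[where h = "\<lambda>y. Oc (oc y 0) (oc y 4) (oc y 2) (- oc y 6) (oc y 5) (oc y 1) (oc y 7) (- oc y 3)"])
      (simp_all add: oct_forall Oc_simps algebra_simps del: split_paired_All)
  subgoal by (rule oct_automorphismI[where h = "\<lambda>y. Oc (oc y 0) (oc y 2) (oc y 4) (oc y 6) (oc y 1) (- oc y 3) (- oc y 5) (oc y 7)"])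
      (simp_all add: oct_forall Oc_simps algebra_simps del: split_paired_All)
  done

text \<open>An automorphism because \<open>conj (s d) (s b) = conj d b\<close> for a unit quaternion \<open>s\<close>.\<close>

definition rotate_second_half :: "quat \<Rightarrow> oct \<Rightarrow> oct" where
  "rotate_second_half s x = (fst x, qmult s (snd x))"

lemma rotate_second_half_Oc:
  "rotate_second_half (Complex s0 s1, Complex s2 s3) (Oc x0 x1 x2 x3 x4 x5 x6 x7) = Oc x0 x1 x2 x3
    (s0*x4 - s1*x5 - s2*x6 - s3*x7) (s0*x5 + s1*x4 + s2*x7 - s3*x6)
    (s0*x6 - s1*x7 + s2*x4 + s3*x5) (s0*x7 + s1*x6 - s2*x5 + s3*x4)"
  by (simp add: rotate_second_half_def Oc_def qmult_def complex_eq_iff algebra_simps)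

lemma rotate_second_half_omult_Oc:
  assumes "s0*s0 + s1*s1 + s2*s2 + s3*s3 = 1"
  shows "rotate_second_half (Complex s0 s1, Complex s2 s3)
      (omult (Oc x0 x1 x2 x3 x4 x5 x6 x7) (Oc y0 y1 y2 y3 y4 y5 y6 y7)) =
    omult (rotate_second_half (Complex s0 s1, Complex s2 s3) (Oc x0 x1 x2 x3 x4 x5 x6 x7))
      (rotate_second_half (Complex s0 s1, Complex s2 s3) (Oc y0 y1 y2 y3 y4 y5 y6 y7))"
  unfolding omult_Oc rotate_second_half_Oc Oc_eq_iff
  apply (intro conjI)
  using assms by algebra+

lemma rotate_second_half_inverse_Oc:
  assumes "s0*s0 + s1*s1 + s2*s2 + s3*s3 = 1"
  shows "rotate_second_half (Complex s0 (- s1), Complex (- s2) (- s3))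
      (rotate_second_half (Complex s0 s1, Complex s2 s3) (Oc x0 x1 x2 x3 x4 x5 x6 x7)) =
    Oc x0 x1 x2 x3 x4 x5 x6 x7"
  unfolding rotate_second_half_Oc Oc_eq_iff
  apply (intro conjI refl)
  using assms by algebra+

lemma oct_automorphism_rotate_second_half:
  assumes "s0*s0 + s1*s1 + s2*s2 + s3*s3 = 1"
  shows "oct_automorphism (rotate_second_half (Complex s0 s1, Complex s2 s3))"
proof (rule oct_automorphismI[where h = "rotate_second_half (Complex s0 (- s1), Complex (- s2) (- s3))"])
  have "(- s1) * (- s1) = s1 * s1" "(- s2) * (- s2) = s2 * s2" "(- s3) * (- s3) = s3 * s3" by simp_all
  then have inv: "s0*s0 + (- s1)*(- s1) + (- s2)*(- s2) + (- s3)*(- s3) = 1" using assms by simp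
  show "\<forall>x. rotate_second_half (Complex s0 (- s1), Complex (- s2) (- s3))
      (rotate_second_half (Complex s0 s1, Complex s2 s3) x) = x"
    "\<forall>x. rotate_second_half (Complex s0 s1, Complex s2 s3)
      (rotate_second_half (Complex s0 (- s1), Complex (- s2) (- s3)) x) = x"
    using rotate_second_half_inverse_Oc[OF assms] rotate_second_half_inverse_Oc[OF inv]
    by (simp_all add: oct_forall del: split_paired_All)
  show "\<forall>x y. rotate_second_half (Complex s0 s1, Complex s2 s3) (omult x y) =
      omult (rotate_second_half (Complex s0 s1, Complex s2 s3) x)
        (rotate_second_half (Complex s0 s1, Complex s2 s3) y)"
    using rotate_second_half_omult_Oc[OF assms] by (simp add: oct_forall del: split_paired_All)
qed (simp_all add: oct_forall rotate_second_half_Oc Oc_simps algebra_simps del: split_paired_All)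

lemma oct_automorphism_id: "oct_automorphism id"
  by (simp add: oct_automorphism_def alg_iso_def linear_id)

lemma oct_automorphism_clears_second_half:
  "\<exists>g r. oct_automorphism g \<and> 0 \<le> r \<and> g (Oc x0 x1 x2 x3 x4 x5 x6 x7) = Oc x0 x1 x2 x3 r 0 0 0"
proof -
  define n where "n = sqrt (x4*x4 + x5*x5 + x6*x6 + x7*x7)"
  have n_sq: "n * n = x4*x4 + x5*x5 + x6*x6 + x7*x7" and "n \<ge> 0"
    unfolding n_def by (simp_all add: add_nonneg_nonneg)
  show ?thesis
  proof (cases "n = 0")
    case True
    moreover have "x4*x4 \<ge> 0" "x5*x5 \<ge> 0" "x6*x6 \<ge> 0" "x7*x7 \<ge> 0" by simp_all
    ultimately have "x4 = 0 \<and> x5 = 0 \<and> x6 = 0 \<and> x7 = 0"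
      using n_sq by (simp add: mult_nonneg_nonneg add_nonneg_eq_0_iff)
    then show ?thesis using oct_automorphism_id by fastforce
  next
    case False
    txt \<open>Rotate by \<open>conj q / |q|\<close>, where \<open>q\<close> is the second half, which takes \<open>q\<close> to \<open>|q|\<close>.\<close>
    have "(x4/n)*(x4/n) + (-x5/n)*(-x5/n) + (-x6/n)*(-x6/n) + (-x7/n)*(-x7/n)
        = (x4*x4 + x5*x5 + x6*x6 + x7*x7) / (n * n)"
      by (simp add: add_divide_distrib)
    also have "\<dots> = 1"
      using False by (simp flip: n_sq)
    finally have "(x4/n)*(x4/n) + (-x5/n)*(-x5/n) + (-x6/n)*(-x6/n) + (-x7/n)*(-x7/n) = 1" .
    moreover have "rotate_second_half (Complex (x4/n) (-x5/n), Complex (-x6/n) (-x7/n))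
        (Oc x0 x1 x2 x3 x4 x5 x6 x7) = Oc x0 x1 x2 x3 n 0 0 0"
      using False n_sq by (simp add: rotate_second_half_Oc Oc_eq_iff field_simps)
    ultimately show ?thesis
      using oct_automorphism_rotate_second_half \<open>n \<ge> 0\<close> by blast
  qed
qed

lemma square_Oc_eq_minus_oone:
  assumes "omult (Oc x0 w 0 0 0 0 0 0) (Oc x0 w 0 0 0 0 0 0) = - oone" and "0 \<le> w"
  shows "x0 = 0 \<and> w = 1"
proof -
  have sq: "x0*x0 - w*w = -1" and "x0*w + w*x0 = 0"
    using assms(1) by (simp_all add: Oc_simps)
  have "x0 = 0"
  proof (rule ccontr)
    assume "x0 \<noteq> 0"
    then have "w = 0" using \<open>x0*w + w*x0 = 0\<close> by simp
    then have "x0 * x0 = -1" using sq by simp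
    then show False using zero_le_square[of x0] by linarith
  qed
  have "w * w = 1" using sq \<open>x0 = 0\<close> by simp
  then have "w = 1"
    using \<open>0 \<le> w\<close> by (metis abs_of_nonneg abs_square_eq_1 power2_eq_square)
  with \<open>x0 = 0\<close> show ?thesis by simp
qed

lemma oct_automorphism_to_e1:
  assumes "omult a a = - oone"
  shows "\<exists>G. oct_automorphism G \<and> G a = Oc 0 1 0 0 0 0 0 0"
proof -
  txt \<open>Alternately clear the second half by a rotation and move two of the remaining
    coordinates into it by a signed permutation, until only \<open>x0\<close> and one imaginary
    coordinate \<open>w \<ge> 0\<close> are left; then \<open>a\<^sup>2 = -1\<close> forces \<open>x0 = 0\<close> and \<open>w = 1\<close>.\<close>
  obtain x0 x1 x2 x3 x4 x5 x6 x7 where a: "a = Oc x0 x1 x2 x3 x4 x5 x6 x7" by (rule oct_cases)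
  obtain g1 t where g1: "oct_automorphism g1" "g1 a = Oc x0 x1 x2 x3 t 0 0 0"
    using oct_automorphism_clears_second_half a by blast
  obtain g2 u where g2: "oct_automorphism g2" "g2 (Oc x0 x1 t 0 x2 x3 0 0) = Oc x0 x1 t 0 u 0 0 0"
    using oct_automorphism_clears_second_half by blast
  obtain g3 v where g3: "oct_automorphism g3" "g3 (Oc x0 x1 0 0 t 0 u 0) = Oc x0 x1 0 0 v 0 0 0"
    using oct_automorphism_clears_second_half by blast
  obtain g4 w where g4: "oct_automorphism g4" "0 \<le> w"
      "g4 (Oc x0 0 0 0 x1 v 0 0) = Oc x0 0 0 0 w 0 0 0"
    using oct_automorphism_clears_second_half by blast
  obtain \<sigma>1 \<sigma>2 \<sigma>3 \<sigma>4 where \<sigma>: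
      "oct_automorphism \<sigma>1" "oct_automorphism \<sigma>2" "oct_automorphism \<sigma>3" "oct_automorphism \<sigma>4"
      "\<sigma>1 (Oc x0 x1 x2 x3 t 0 0 0) = Oc x0 x1 t 0 x2 x3 0 0"
      "\<sigma>2 (Oc x0 x1 t 0 u 0 0 0) = Oc x0 x1 0 0 t 0 u 0"
      "\<sigma>3 (Oc x0 x1 0 0 v 0 0 0) = Oc x0 0 0 0 x1 v 0 0"
      "\<sigma>4 (Oc x0 0 0 0 w 0 0 0) = Oc x0 w 0 0 0 0 0 0"
    by (rule that[OF signed_coordinate_permutation_automorphisms]) simp_all
  define G where "G = \<sigma>4 \<circ> g4 \<circ> \<sigma>3 \<circ> g3 \<circ> \<sigma>2 \<circ> g2 \<circ> \<sigma>1 \<circ> g1"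
  have G: "oct_automorphism G"
    unfolding G_def using \<sigma> g1 g2 g3 g4 by (intro oct_automorphism_comp)
  have Ga: "G a = Oc x0 w 0 0 0 0 0 0"
    unfolding G_def using \<sigma> g1 g2 g3 g4 by simp
  have "linear G" and hom: "G (omult a a) = omult (G a) (G a)"
    using G unfolding oct_automorphism_def alg_iso_def by blast+
  have "G (omult a a) = - oone"
    using assms oct_automorphism_oone[OF G] linear_neg[OF \<open>linear G\<close>] by simp
  then have "omult (G a) (G a) = - oone" using hom by simp
  then have "x0 = 0 \<and> w = 1"
    unfolding Ga using \<open>0 \<le> w\<close> by (rule square_Oc_eq_minus_oone)
  then show ?thesis using G Ga by blast
qed

lemma oct_automorphism_between_imaginary_units:
  assumes "omult a a = - oone" "omult b b = - oone"
  shows "\<exists>g. oct_automorphism g \<and> g a = b"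
proof -
  obtain Ga where Ga: "oct_automorphism Ga" "Ga a = Oc 0 1 0 0 0 0 0 0"
    using oct_automorphism_to_e1 assms(1) by blast
  obtain Gb where Gb: "oct_automorphism Gb" "Gb b = Oc 0 1 0 0 0 0 0 0"
    using oct_automorphism_to_e1 assms(2) by blast
  have "inj Gb"
    using Gb(1) unfolding oct_automorphism_def alg_iso_def by (blast dest: bij_is_inj)
  then have "(inv Gb \<circ> Ga) a = b"
    using Ga(2) Gb(2) by (metis comp_apply inv_f_f)
  with Ga Gb show ?thesis by (blast intro: oct_automorphism_comp oct_automorphism_inv)
qed

theorem lemma13:
  fixes a :: oct
  assumes ha: "omult a a = oone \<or> omult a a = - oone"
  shows "alg_iso (star_mult a) (twisted_mult (T_conj a \<circ> oconj)) (\<lambda>x. omult (oconj a) x)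
     \<and> (omult a a = - oone \<longrightarrow>
          (\<forall>i::oct. omult i i = - oone \<longrightarrow>
             (\<exists>\<Psi>. alg_iso (twisted_mult (T_conj a \<circ> oconj)) (star_mult i) \<Psi>)))"
proof -
  have iso: "alg_iso (star_mult a) (twisted_mult (T_conj a \<circ> oconj)) (\<lambda>x. omult (oconj a) x)"
    using ha by (rule alg_iso_omult_oconj)
  have "\<exists>\<Psi>. alg_iso (twisted_mult (T_conj a \<circ> oconj)) (star_mult i) \<Psi>"
    if units: "omult a a = - oone" "omult i i = - oone" for i
  proof -
    obtain g where g: "oct_automorphism g" "g a = i"
      using oct_automorphism_between_imaginary_units[OF units] by blast
    then have "alg_iso (star_mult a) (star_mult i) g"
      using oct_automorphism_star_mult by metis
    then show ?thesis
      using alg_iso_comp[OF alg_iso_inv[OF iso]] by blast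
  qed
  with iso show ?thesis by blast
qed

end
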